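(* Let $T_0<T_f<T_i$. Let $\xi=\xi_{T_0}$ be the coefficient of the Neumann solution of problem (P1) with datum $T_0$. Then $$\operatorname{erf}\Big(\xi\sqrt{\tfrac{\alpha_\ell}{\alpha_s}}\Big)<\frac{k_s}{k_\ell}\sqrt{\frac{\alpha_\ell}{\alpha_s}}\;\frac{T_f-T_0}{T_i-T_f}.$$
   Context: Physical constants: density $\rho>0$, specific heats $c_s,c_\ell>0$, thermal conductivities $k_s,k_\ell>0$, latent heat $\ell>0$. Diffusivities are $\alpha_s=k_s/(\rho c_s)$ and $\alpha_\ell=k_\ell/(\rho c_\ell)$, and $b=\alpha_\ell/\alpha_s$. The error functions are $\operatorname{erf}(x)=\frac2{\sqrt\pi}\int_0^xe^{-u^2}du$ and $\operatorname{erfc}=1-\operatorname{erf}$. Set $F_1(x)=e^{-x^2}/\operatorname{erfc}(x)$ and $F_2(x)=e^{-x^2}/\operatorname{erf}(x)$. Problem (P1): find $s(t)$ and temperatures $T_s$ (on $0<x<s(t)$) and $T_\ell$ (on $x>s(t)$) such that: - $\rho c_sT_{s,t}=k_sT_{s,xx}$ and $\rho c_\ell T_{\ell,t}=k_\ell T_{\ell,xx}$; - $s(0)=0$; - $T_\ell(x,0)=T_\ell(+\infty,t)=T_i>T_f$; - $T_s(s(t),t)=T_\ell(s(t),t)=T_f$; - $k_sT_{s,x}(s(t),t)-k_\ell T_{\ell,x}(s(t),t)=\rho\ell\dot s(t)$; - $T_s(0,t)=T_0<T_f$. Its Neumann solution has free boundary $s(t)=2\xi\sqrt{\alpha_\ell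 t}$. Here $\xi>0$ is the unique positive solution of $G(x)=x$, where $G(x)=b_4F_2(\sqrt bx)-b_3F_1(x)$, $b_3=\frac{c_\ell(T_i-T_f)}{\ell\sqrt\pi}$ and $b_4=\frac{k_s(T_f-T_0)}{\rho\ell\sqrt{\pi\alpha_s\alpha_\ell}}$. *)

theory Defs
  imports "HOL-Analysis.Analysis"
begin

definition erf :: "real \<Rightarrow> real" where
  "erf x = 2 / sqrt pi * integral {0..x} (\<lambda>u. exp (- (u\<^sup>2)))"

definition erfc :: "real \<Rightarrow> real" where
  "erfc x = 1 - erf x"

definition F1 :: "real \<Rightarrow> real" where
  "F1 x = exp (- (x\<^sup>2)) / erfc x"

definition F2 :: "real \<Rightarrow> real" where
  "F2 x = exp (- (x\<^sup>2)) / erf x"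

text \<open>The function G whose unique positive fixed point is the Neumann coefficient xi of (P1).
  Parameters: rho, c_s, c_l, k_s, k_l, latent heat l, temperatures T0, Tf, Ti.\<close>
definition G_neumann :: "real \<Rightarrow> real \<Rightarrow> real \<Rightarrow> real \<Rightarrow> real \<Rightarrow> real \<Rightarrow> real \<Rightarrow> real \<Rightarrow> real \<Rightarrow> real \<Rightarrow> real" where
  "G_neumann \<rho> cs cl ks kl l T0 Tf Ti x =
     (let \<alpha>s = ks / (\<rho> * cs); \<alpha>l = kl / (\<rho> * cl); b = \<alpha>l / \<alpha>s;
          b3 = cl * (Ti - Tf) / (l * sqrt pi);
          b4 = ks * (Tf - T0) / (\<rho> * l * sqrt (pi * \<alpha>s * \<alpha>l))
      in b4 * F2 (sqrt b * x) - b3 * F1 x)"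

end

theory Submission imports Defs "HOL-Probability.Distributions" begin

(*
  Write y = sqrt b * xi.  The fixed-point equation G(xi) = xi reads
     b4 * exp (-y^2) / erf y = xi + b3 * F1 xi.
  For xi > 0 we have F1 xi >= 1, because 0 < erfc xi <= exp (-xi^2); hence the
  right-hand side exceeds b3, and since exp (-y^2) <= 1 we get erf y < b4 / b3.
  Finally b4 / b3 is exactly the right-hand side of the claimed inequality.
*)

text \<open>The half-line Gaussian integral, transferred from the Lebesgue integral
  in the library to the gauge integral used in the definition of erf.\<close>
lemma gaussian_half_line_integral:
  "((\<lambda>u. exp (- (u\<^sup>2))) has_integral (sqrt pi / 2)) {0::real..}"
proof -
  have h: "has_bochner_integral lborel (\<lambda>x. indicator {0..} x *\<^sub>R exp (- x\<^sup>2)) (sqrt pi / 2)"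
    by (rule gaussian_moment_0)
  have "((\<lambda>x::real. indicator {0..} x *\<^sub>R exp (- x\<^sup>2)) has_integral (sqrt pi / 2)) UNIV"
    using has_integral_integral_lborel[OF integrable.intros[OF h]]
    unfolding has_bochner_integral_integral_eq[OF h] .
  moreover have "(\<lambda>x::real. indicator {0..} x *\<^sub>R exp (- x\<^sup>2))
                 = (\<lambda>x. if x \<in> {0..} then exp (- x\<^sup>2) else 0)"
    by (auto simp: indicator_def)
  ultimately show ?thesis
    using has_integral_restrict_UNIV[of "{0::real..}" "\<lambda>u. exp (- (u\<^sup>2))"] by simp
qed

text \<open>Pointwise comparison behind the tail bound: for \<open>0 \<le> x \<le> u\<close> one has
  \<open>u\<^sup>2 \<ge> x\<^sup>2 + (u - x)\<^sup>2\<close>, so the Gaussian at \<open>u\<close> is dominated by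
  \<open>exp (-x\<^sup>2)\<close> times the Gaussian shifted to start at \<open>x\<close>.\<close>
lemma gaussian_shift_bound:
  fixes x u :: real
  assumes "0 \<le> x" "x \<le> u"
  shows "exp (- u\<^sup>2) \<le> exp (- x\<^sup>2) * exp (- (u - x)\<^sup>2)"
proof -
  have "x\<^sup>2 + (u - x)\<^sup>2 \<le> u\<^sup>2"
    using assms mult_right_mono[OF assms(2) assms(1)] by (simp add: power2_eq_square algebra_simps)
  then have "exp (- u\<^sup>2) \<le> exp (- x\<^sup>2 + - (u - x)\<^sup>2)" by simp
  then show ?thesis by (simp only: exp_add)
qed

lemma gaussian_tail_bound:
  fixes x :: real
  assumes x: "x \<ge> 0"
  obtains T where "((\<lambda>u. exp (- (u\<^sup>2))) has_integral T) {x..}"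
    and "T \<le> exp (- x\<^sup>2) * (sqrt pi / 2)"
proof -
  let ?f = "\<lambda>u::real. indicator {0..} (u - x) *\<^sub>R exp (- (u - x)\<^sup>2)"
  let ?Q = "\<lambda>u::real. indicator {x..} u *\<^sub>R exp (- u\<^sup>2)"
  have hf: "has_bochner_integral lborel ?f (sqrt pi / 2)"
    using lborel_has_bochner_integral_real_affine_iff[of 1 ?f "sqrt pi / 2" x] gaussian_moment_0
    by simp
  have dom: "norm (?Q u) \<le> exp (- x\<^sup>2) * ?f u" for u
    using gaussian_shift_bound[OF x, of u] by (auto simp: indicator_def)
  have int_f: "integrable lborel (\<lambda>u. exp (- x\<^sup>2) * ?f u)"
    using integrable.intros[OF hf] by simp
  have int_Q: "integrable lborel ?Q"
    by (rule Bochner_Integration.integrable_bound[OF int_f]) (use dom in auto)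
  have "integral\<^sup>L lborel ?Q \<le> integral\<^sup>L lborel (\<lambda>u. exp (- x\<^sup>2) * ?f u)"
    by (rule integral_mono[OF int_Q int_f]) (use dom in auto)
  also have "\<dots> = exp (- x\<^sup>2) * (sqrt pi / 2)"
    using hf by (simp add: has_bochner_integral_iff)
  finally have le: "integral\<^sup>L lborel ?Q \<le> exp (- x\<^sup>2) * (sqrt pi / 2)" .
  have "(?Q has_integral integral\<^sup>L lborel ?Q) UNIV"
    by (rule has_integral_integral_lborel[OF int_Q])
  moreover have "?Q = (\<lambda>u. if u \<in> {x..} then exp (- u\<^sup>2) else 0)"
    by (auto simp: indicator_def)
  ultimately have "((\<lambda>u. exp (- (u\<^sup>2))) has_integral integral\<^sup>L lborel ?Q) {x..}"
    using has_integral_restrict_UNIV[of "{x..}" "\<lambda>u. exp (- (u\<^sup>2))"] by simp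
  with le show ?thesis using that by blast
qed

text \<open>For \<open>x \<ge> 0\<close>, \<open>erfc x\<close> is the normalised Gaussian tail integral over
  \<open>[x, \<infinity>)\<close>: split the half line at \<open>x\<close>.\<close>
lemma erfc_eq_tail_integral:
  fixes x T :: real
  assumes x: "x \<ge> 0" and T: "((\<lambda>u. exp (- (u\<^sup>2))) has_integral T) {x..}"
  shows "erfc x = 2 / sqrt pi * T"
proof -
  let ?g = "\<lambda>u::real. exp (- (u\<^sup>2))"
  have "?g integrable_on {0..x}"
    by (intro integrable_continuous_real continuous_intros)
  then have "(?g has_integral (integral {0..x} ?g + T)) ({0..x} \<union> {x..})"
    by (rule has_integral_Un[OF integrable_integral T]) (rule negligible_subset[of "{x}"], auto)
  moreover have "{0..x} \<union> {x..} = {0::real..}" using x by auto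
  ultimately have "(?g has_integral (integral {0..x} ?g + T)) {0..}" by simp
  then have "integral {0..x} ?g + T = sqrt pi / 2"
    using gaussian_half_line_integral has_integral_unique by blast
  moreover have "sqrt pi > 0" by simp
  ultimately show ?thesis
    unfolding erfc_def erf_def by (simp add: field_simps)
qed

text \<open>The Gaussian tail over \<open>[x, \<infinity>)\<close> is strictly positive: it dominates
  the integral over \<open>[x, x + 1]\<close>, which is at least \<open>exp (-(x + 1)\<^sup>2)\<close>.\<close>
lemma gaussian_tail_pos:
  fixes x T :: real
  assumes x: "x \<ge> 0" and T: "((\<lambda>u. exp (- (u\<^sup>2))) has_integral T) {x..}"
  shows "T > 0"
proof -
  let ?g = "\<lambda>u::real. exp (- (u\<^sup>2))"
  have gi: "?g integrable_on {x..x+1}"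
    by (intro integrable_continuous_real continuous_intros)
  have "exp (- (x+1)\<^sup>2) = integral {x..x+1} (\<lambda>u. exp (- (x+1)\<^sup>2))" by simp
  also have "\<dots> \<le> integral {x..x+1} ?g"
  proof (rule integral_le)
    fix u assume "u \<in> {x..x+1}"
    then have "u\<^sup>2 \<le> (x+1)\<^sup>2" using x by (intro power_mono) auto
    then show "exp (- (x+1)\<^sup>2) \<le> exp (- u\<^sup>2)" by simp
  qed (use gi in auto)
  also have "\<dots> \<le> integral {x..} ?g"
    by (rule integral_subset_le) (use T gi in auto)
  also have "\<dots> = T" using T by (rule integral_unique)
  finally show ?thesis by (smt (verit) exp_gt_zero)
qed

lemma erfc_bounds:
  fixes x :: real
  assumes x: "x \<ge> 0"
  shows "0 < erfc x" and "erfc x \<le> exp (- x\<^sup>2)"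
proof -
  obtain T where T: "((\<lambda>u. exp (- (u\<^sup>2))) has_integral T) {x..}"
    and T_le: "T \<le> exp (- x\<^sup>2) * (sqrt pi / 2)"
    using gaussian_tail_bound[OF x] by blast
  have erfc: "erfc x = 2 / sqrt pi * T" by (rule erfc_eq_tail_integral[OF x T])
  show "0 < erfc x"
    unfolding erfc using gaussian_tail_pos[OF x T] by simp
  have "erfc x \<le> 2 / sqrt pi * (exp (- x\<^sup>2) * (sqrt pi / 2))"
    unfolding erfc using T_le by (intro mult_left_mono) auto
  then show "erfc x \<le> exp (- x\<^sup>2)" by simp
qed

lemma F1_ge_one:
  fixes x :: real
  assumes "x \<ge> 0"
  shows "1 \<le> F1 x"
  using erfc_bounds[OF assms] by (simp add: F1_def)

text \<open>The core estimate: any positive solution \<open>\<xi>\<close> of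
  \<open>b4 * F2 y - b3 * F1 \<xi> = \<xi>\<close> with positive coefficients forces
  \<open>erf y < b4 / b3\<close>, since \<open>b4 * exp (-y\<^sup>2) = erf y * (\<xi> + b3 * F1 \<xi>)\<close>
  and \<open>\<xi> + b3 * F1 \<xi> > b3\<close>.\<close>
lemma erf_bound_from_fixed_point:
  fixes b3 b4 \<xi> y :: real
  assumes b3: "b3 > 0" and b4: "b4 > 0" and \<xi>: "\<xi> > 0"
    and fixed_point: "b4 * F2 y - b3 * F1 \<xi> = \<xi>"
  shows "erf y < b4 / b3"
proof (cases "erf y > 0")
  case False
  then show ?thesis using b3 b4 by (smt (verit) divide_pos_pos)
next
  case True
  have "b3 \<le> b3 * F1 \<xi>"
    using F1_ge_one[of \<xi>] \<xi> b3 by simp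
  then have gt: "b3 < \<xi> + b3 * F1 \<xi>" using \<xi> by simp
  have "b4 * (exp (- y\<^sup>2) / erf y) = \<xi> + b3 * F1 \<xi>"
    using fixed_point by (simp add: F2_def)
  then have eq: "b4 * exp (- y\<^sup>2) = erf y * (\<xi> + b3 * F1 \<xi>)"
    using True by (simp add: field_simps)
  have "erf y * b3 < erf y * (\<xi> + b3 * F1 \<xi>)"
    using gt True by (rule mult_strict_left_mono)
  also have "\<dots> \<le> b4"
    unfolding eq[symmetric] using b4 by (simp add: mult_left_le)
  finally show ?thesis using b3 by (simp add: field_simps)
qed

lemma neumann_coefficient_ratio:
  fixes \<rho> cs cl ks kl l T0 Tf Ti :: real
  assumes "\<rho> > 0" "cs > 0" "cl > 0" "ks > 0" "kl > 0" "l > 0" "Tf \<noteq> Ti"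
  defines "\<alpha>s \<equiv> ks / (\<rho> * cs)" and "\<alpha>l \<equiv> kl / (\<rho> * cl)"
  shows "(ks * (Tf - T0) / (\<rho> * l * sqrt (pi * \<alpha>s * \<alpha>l))) / (cl * (Ti - Tf) / (l * sqrt pi))
         = ks / kl * sqrt (\<alpha>l / \<alpha>s) * ((Tf - T0) / (Ti - Tf))"
proof -
  define sa sl where "sa = sqrt \<alpha>s" and "sl = sqrt \<alpha>l"
  have pos: "\<alpha>s > 0" "\<alpha>l > 0" using assms by (auto simp: \<alpha>s_def \<alpha>l_def)
  then have sa: "sa > 0" "sa\<^sup>2 = \<alpha>s" and sl: "sl > 0" "sl\<^sup>2 = \<alpha>l"
    by (auto simp: sa_def sl_def)
  have kl: "kl = \<rho> * cl * sl\<^sup>2" using sl assms by (simp add: \<alpha>l_def field_simps)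
  have sqrt_ratio: "sqrt (\<alpha>l / \<alpha>s) = sl / sa"
    by (simp add: sa_def sl_def real_sqrt_divide)
  have sqrt_prod: "sqrt (pi * \<alpha>s * \<alpha>l) = sqrt pi * sa * sl"
    by (simp add: sa_def sl_def real_sqrt_mult)
  show ?thesis
    unfolding sqrt_ratio sqrt_prod kl using sa(1) sl(1) assms(1,3,6,7)
    by (simp add: field_simps power2_eq_square)
qed

theorem corollary5:
  fixes \<rho> cs cl ks kl l T0 Tf Ti \<xi> :: real
  assumes "\<rho> > 0" "cs > 0" "cl > 0" "ks > 0" "kl > 0" "l > 0"
    and "T0 < Tf" "Tf < Ti"
    and "\<xi> > 0" "G_neumann \<rho> cs cl ks kl l T0 Tf Ti \<xi> = \<xi>"
  shows "erf (\<xi> * sqrt ((kl / (\<rho> * cl)) / (ks / (\<rho> * cs))))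
         < ks / kl * sqrt ((kl / (\<rho> * cl)) / (ks / (\<rho> * cs))) * ((Tf - T0) / (Ti - Tf))"
proof -
  define \<alpha>s \<alpha>l where "\<alpha>s = ks / (\<rho> * cs)" and "\<alpha>l = kl / (\<rho> * cl)"
  define b3 where "b3 = cl * (Ti - Tf) / (l * sqrt pi)"
  define b4 where "b4 = ks * (Tf - T0) / (\<rho> * l * sqrt (pi * \<alpha>s * \<alpha>l))"
  have "\<alpha>s > 0" "\<alpha>l > 0" using assms by (auto simp: \<alpha>s_def \<alpha>l_def)
  then have b3: "b3 > 0" and b4: "b4 > 0" using assms by (auto simp: b3_def b4_def)
  have "b4 * F2 (sqrt (\<alpha>l / \<alpha>s) * \<xi>) - b3 * F1 \<xi> = \<xi>"
    using assms(10) unfolding G_neumann_def Let_def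
      \<alpha>s_def[symmetric] \<alpha>l_def[symmetric] b3_def[symmetric] b4_def[symmetric] .
  then have "erf (sqrt (\<alpha>l / \<alpha>s) * \<xi>) < b4 / b3"
    using erf_bound_from_fixed_point[OF b3 b4 assms(9)] by blast
  moreover have "b4 / b3 = ks / kl * sqrt (\<alpha>l / \<alpha>s) * ((Tf - T0) / (Ti - Tf))"
    unfolding b3_def b4_def \<alpha>s_def \<alpha>l_def
    using neumann_coefficient_ratio[OF assms(1-6)] assms(8) by simp
  ultimately show ?thesis by (simp add: \<alpha>s_def \<alpha>l_def mult.commute)
qed

end
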